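(* There is an absolute constant $c_1>0$ such that for each $b\in(0,\pi]$, each $n\in\mathbb{N}$, any linear function $l(x)=ax+k$ ($a,k\in\mathbb{R}$) and every trigonometric polynomial $T_n\in\mathcal{T}_n$, $$\|F_1+l-T_n\|_{[-b,b]}\ge\frac{c_1 b}{n},$$ where $F_1(x)=|x|$.
   Context: $\mathcal{T}_n$ is the space of real trigonometric polynomials of degree $\le n$. For a function $g$ on $[a,b]$, $\|g\|_{[a,b]}:=\max_{x\in[a,b]}|g(x)|$. *)

theory Defs
  imports "HOL-Analysis.Analysis"
begin

definition trig_poly :: "nat \<Rightarrow> (real \<Rightarrow> real) set" where
  "trig_poly n = {T. \<exists>a b :: nat \<Rightarrow> real. \<forall>x.
      T x = a 0 + (\<Sum>k=1..n. a k * cos (real k * x) + b k * sin (real k * x))}"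

definition sup_norm_on :: "real \<Rightarrow> real \<Rightarrow> (real \<Rightarrow> real) \<Rightarrow> real" where
  "sup_norm_on lo hi g = (SUP x\<in>{lo..hi}. \<bar>g x\<bar>)"

end

theory Submission
  imports Defs "HOL-Computational_Algebra.Polynomial"
begin

text \<open>Symmetrizing under \<open>x \<mapsto> - x\<close> removes the linear term and the odd part of \<open>T\<close>. The
  substitution \<open>x = 2 arcsin (s sin (t / 2))\<close> with \<open>s = sin (b / 4)\<close> maps every \<open>t\<close> into
  \<open>[- b / 2, b / 2]\<close> and turns \<open>cos x\<close> into \<open>1 - s\<^sup>2 + s\<^sup>2 cos t\<close>, so a deviation \<open>\<epsilon>\<close>
  on \<open>[- b, b]\<close> yields a uniform approximation of \<open>\<bar>x (t)\<bar> + k\<close> within \<open>\<epsilon>\<close> by a polynomial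
  of degree \<open>n\<close> in \<open>cos t\<close>. With \<open>h = 2 \<pi> / N\<close>, \<open>N = 40 n\<close> and the de la Vallee Poussin
  kernel \<open>V\<^sub>n\<close>, the functional \<open>\<Delta>\<^sub>h\<^sup>2 F (0) - N\<^sup>-\<^sup>1 \<Sum>\<^sub>j V\<^sub>n (j h) \<Delta>\<^sub>h\<^sup>2 F (j h)\<close> kills such
  cosine polynomials and is at most \<open>16 \<epsilon>\<close> on the error, while the concavity of \<open>x (t)\<close> on
  \<open>[0, 2 \<pi>]\<close> makes it at least \<open>x (h) \<ge> 4 s / N\<close> on \<open>\<bar>x (t)\<bar>\<close>.\<close>

section \<open>Fejer and de la Vallee Poussin kernels\<close>

lemma sum_cos_equidistant:
  fixes q :: int
  assumes N: "N > 0"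
  shows "(\<Sum>j<N. cos (of_int q * (real j * (2 * pi / real N)))) = (if int N dvd q then real N else 0)"
proof (cases "int N dvd q")
  case True
  then obtain m where q: "q = int N * m" by (auto elim: dvdE)
  have "cos (of_int q * (real j * (2 * pi / real N))) = 1" for j
    unfolding cos_one_2pi_int using N
    by (intro exI[of _ "m * int j"]) (simp add: q field_simps)
  then show ?thesis using True by simp
next
  case False
  define z where "z = cis (of_int q * (2 * pi / real N))"
  have z_power: "z ^ j = cis (of_int q * (real j * (2 * pi / real N)))" for j
    unfolding z_def Complex.DeMoivre by (simp add: algebra_simps)
  have "z ^ N = cis (2 * pi * of_int q)"
    unfolding z_power by (rule arg_cong[where f = cis]) (use N in simp)
  then have "z ^ N = 1" by simp
  moreover have "z \<noteq> 1"
  proof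
    assume "z = 1"
    then have "cos (of_int q * (2 * pi / real N)) = 1"
      unfolding z_def by (metis cis.sel(1) one_complex.sel(1))
    then obtain m :: int where "of_int q * (2 * pi / real N) = of_int m * 2 * pi"
      using cos_one_2pi_int by blast
    then have "real_of_int q = of_int (m * int N)"
      using N by (simp add: field_simps)
    then show False using False by (metis dvd_triv_right of_int_eq_iff)
  qed
  ultimately have "(\<Sum>j<N. z ^ j) = 0" by (simp add: sum_gp_strict)
  then have "Re (\<Sum>j<N. z ^ j) = 0" by simp
  then show ?thesis using False by (simp add: z_power)
qed

text \<open>In complex form this is \<open>\<bar>\<Sum>k\<le>m. e\<^sup>i\<^sup>k\<^sup>t\<bar>\<^sup>2 / (m + 1) = \<Sum>\<bar>p\<bar>\<le>m. (1 - \<bar>p\<bar> / (m + 1)) e\<^sup>i\<^sup>p\<^sup>t\<close>.\<close>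
definition fejer_kernel :: "nat \<Rightarrow> real \<Rightarrow> real" where
  "fejer_kernel m t = ((\<Sum>k\<le>m. cos (real k * t))\<^sup>2 + (\<Sum>k\<le>m. sin (real k * t))\<^sup>2) / real (m + 1)"

lemma fejer_kernel_eq_double_sum:
  "fejer_kernel m t = (\<Sum>k\<le>m. \<Sum>l\<le>m. cos ((real k - real l) * t)) / real (m + 1)"
  unfolding fejer_kernel_def
  by (simp add: power2_eq_square sum_product sum.distrib[symmetric] cos_diff left_diff_distrib)

lemma fejer_kernel_nonneg: "fejer_kernel m t \<ge> 0"
  unfolding fejer_kernel_def by simp

lemma fejer_kernel_le: "fejer_kernel m t \<le> real m + 1"
proof -
  have "(\<Sum>k\<le>m. \<Sum>l\<le>m. cos ((real k - real l) * t)) \<le> (\<Sum>k\<le>m. \<Sum>l\<le>m. 1)"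
    by (intro sum_mono) simp
  also have "\<dots> = (real m + 1)\<^sup>2" by (simp add: power2_eq_square algebra_simps)
  finally show ?thesis
    unfolding fejer_kernel_eq_double_sum by (simp add: field_simps power2_eq_square)
qed

lemma sum_cos_mult_cos_equidistant:
  fixes a b :: int
  assumes N: "\<bar>a - b\<bar> < int N" "\<bar>a + b\<bar> < int N"
  shows "(\<Sum>j<N. cos (of_int a * (real j * (2 * pi / real N))) * cos (of_int b * (real j * (2 * pi / real N))))
           = real N / 2 * (of_bool (a = b) + of_bool (a = - b))"
proof -
  have N_pos: "N > 0" using N by linarith
  have cos_sum: "(\<Sum>j<N. cos (of_int q * (real j * (2 * pi / real N)))) = real N * of_bool (q = 0)"
    if "\<bar>q\<bar> < int N" for q
    using sum_cos_equidistant[OF N_pos, of q] that dvd_imp_le_int[of q "int N"] by auto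
  have "cos (of_int a * x) * cos (of_int b * x) = (cos (of_int (a - b) * x) + cos (of_int (a + b) * x)) / 2" for x :: real
    by (simp add: cos_times_cos algebra_simps)
  then have "(\<Sum>j<N. cos (of_int a * (real j * (2 * pi / real N))) * cos (of_int b * (real j * (2 * pi / real N))))
      = ((\<Sum>j<N. cos (of_int (a - b) * (real j * (2 * pi / real N))))
         + (\<Sum>j<N. cos (of_int (a + b) * (real j * (2 * pi / real N))))) / 2"
    by (simp only: sum.distrib flip: sum_divide_distrib)
  also have "\<dots> = real N / 2 * (of_bool (a = b) + of_bool (a = - b))"
    unfolding cos_sum[OF N(1)] cos_sum[OF N(2)] by (simp add: algebra_simps eq_neg_iff_add_eq_0)
  finally show ?thesis .
qed

lemma sum_fejer_kernel_cos_equidistant: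
  assumes p: "p \<le> m" and N: "m + p < N"
  shows "(\<Sum>j<N. fejer_kernel m (real j * (2 * pi / real N)) * cos (real p * (real j * (2 * pi / real N))))
           = real N * (1 - real p / (real m + 1))"
proof -
  define \<theta> where "\<theta> j = real j * (2 * pi / real N)" for j
  have inner: "(\<Sum>j<N. cos ((real k - real l) * \<theta> j) * cos (real p * \<theta> j))
      = real N / 2 * (of_bool (k = l + p) + of_bool (l = k + p))" if "k \<le> m" "l \<le> m" for k l
    using sum_cos_mult_cos_equidistant[of "int k - int l" "int p" N] that p N
    unfolding \<theta>_def by auto
  have count: "(\<Sum>k\<le>m. \<Sum>l\<le>m. of_bool (l = k + p)) = real m + 1 - real p"
  proof -
    have "(\<Sum>k\<le>m. \<Sum>l\<le>m. of_bool (l = k + p) :: real) = (\<Sum>k\<le>m - p. 1)"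
      using p by (intro sum.mono_neutral_cong_right) (auto simp: of_bool_def sum.delta)
    then show ?thesis using p by (simp add: of_nat_diff)
  qed
  have "(\<Sum>j<N. fejer_kernel m (\<theta> j) * cos (real p * \<theta> j))
     = (\<Sum>k\<le>m. \<Sum>l\<le>m. \<Sum>j<N. cos ((real k - real l) * \<theta> j) * cos (real p * \<theta> j)) / real (m + 1)"
    unfolding fejer_kernel_eq_double_sum
    by (simp add: sum_divide_distrib sum_distrib_right sum.swap[of _ "{..<N}"])
  also have "\<dots> = (\<Sum>k\<le>m. \<Sum>l\<le>m. real N / 2 * (of_bool (k = l + p) + of_bool (l = k + p))) / real (m + 1)"
    by (intro arg_cong[where f = "\<lambda>x. x / real (m + 1)"] sum.cong refl inner) auto
  also have "\<dots> = real N / 2 * ((\<Sum>k\<le>m. \<Sum>l\<le>m. of_bool (k = l + p))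
                  + (\<Sum>k\<le>m. \<Sum>l\<le>m. of_bool (l = k + p))) / real (m + 1)"
    by (simp only: distrib_left sum_distrib_left sum.distrib)
  also have "(\<Sum>k\<le>m. \<Sum>l\<le>m. of_bool (k = l + p)) = (\<Sum>k\<le>m. \<Sum>l\<le>m. (of_bool (l = k + p) :: real))"
    by (rule sum.swap)
  finally show ?thesis unfolding count \<theta>_def by (simp add: field_simps)
qed

text \<open>Its Fourier coefficients \<open>2 (1 - p / (2 n + 2)) - (1 - p / (n + 1))\<close> equal \<open>1\<close> for \<open>p \<le> n\<close>.\<close>
definition vallee_poussin :: "nat \<Rightarrow> real \<Rightarrow> real" where
  "vallee_poussin n t = 2 * fejer_kernel (2 * n + 1) t - fejer_kernel n t"

lemma sum_vallee_poussin_cos_equidistant: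
  assumes N: "3 * n + 2 \<le> N" and p: "p \<le> n"
  shows "(\<Sum>j<N. vallee_poussin n (real j * (2 * pi / real N)) * cos (real p * (real j * (2 * pi / real N))))
           = real N"
proof -
  define \<theta> where "\<theta> j = real j * (2 * pi / real N)" for j
  have "(\<Sum>j<N. vallee_poussin n (\<theta> j) * cos (real p * \<theta> j))
     = 2 * (\<Sum>j<N. fejer_kernel (2 * n + 1) (\<theta> j) * cos (real p * \<theta> j))
         - (\<Sum>j<N. fejer_kernel n (\<theta> j) * cos (real p * \<theta> j))"
    unfolding vallee_poussin_def by (simp add: left_diff_distrib sum_subtractf sum_distrib_left mult.assoc)
  also have "\<dots> = 2 * (real N * (1 - real p / (real (2 * n + 1) + 1))) - real N * (1 - real p / (real n + 1))"
    using sum_fejer_kernel_cos_equidistant[of p "2 * n + 1" N] sum_fejer_kernel_cos_equidistant[of p n N] N p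
    unfolding \<theta>_def by simp
  also have "\<dots> = real N"
  proof -
    have "2 * (M * (1 - P / (2 * x))) - M * (1 - P / x) = M" if "x > 0" for x M P :: real
      using that by (simp add: field_simps)
    from this[of "real n + 1"] show ?thesis by (simp add: add.commute)
  qed
  finally show ?thesis unfolding \<theta>_def .
qed

lemma abs_vallee_poussin_le: "\<bar>vallee_poussin n t\<bar> \<le> 5 * (real n + 1)"
  using fejer_kernel_nonneg[of "2 * n + 1" t] fejer_kernel_nonneg[of n t]
    fejer_kernel_le[of "2 * n + 1" t] fejer_kernel_le[of n t]
  unfolding vallee_poussin_def by simp

lemma sum_abs_vallee_poussin_equidistant:
  assumes N: "3 * n + 2 \<le> N"
  shows "(\<Sum>j<N. \<bar>vallee_poussin n (real j * (2 * pi / real N))\<bar>) \<le> 3 * real N"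
proof -
  have "(\<Sum>j<N. \<bar>vallee_poussin n (real j * (2 * pi / real N))\<bar>)
     \<le> (\<Sum>j<N. 2 * fejer_kernel (2 * n + 1) (real j * (2 * pi / real N)) + fejer_kernel n (real j * (2 * pi / real N)))"
    unfolding vallee_poussin_def using fejer_kernel_nonneg by (intro sum_mono) (simp add: abs_le_iff)
  also have "\<dots> = 3 * real N"
    using sum_fejer_kernel_cos_equidistant[of 0 "2 * n + 1" N] sum_fejer_kernel_cos_equidistant[of 0 n N] N
    by (simp add: sum.distrib sum_distrib_left[symmetric])
  finally show ?thesis .
qed

definition vp_mean :: "nat \<Rightarrow> nat \<Rightarrow> (real \<Rightarrow> real) \<Rightarrow> real" where
  "vp_mean n N g = (\<Sum>j<N. vallee_poussin n (real j * (2 * pi / real N)) * g (real j * (2 * pi / real N))) / real N"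

lemma vp_mean_add: "vp_mean n N (\<lambda>t. f t + g t) = vp_mean n N f + vp_mean n N g"
  unfolding vp_mean_def by (simp add: distrib_left sum.distrib add_divide_distrib)

lemma vp_mean_cmult: "vp_mean n N (\<lambda>t. c * g t) = c * vp_mean n N g"
  unfolding vp_mean_def by (simp add: sum_distrib_left algebra_simps)

lemma vp_mean_cos:
  assumes "3 * n + 2 \<le> N" "p \<le> n"
  shows "vp_mean n N (\<lambda>t. cos (real p * t)) = 1"
  using sum_vallee_poussin_cos_equidistant[OF assms] assms(1) unfolding vp_mean_def by simp

lemma abs_vp_mean_le:
  assumes N: "3 * n + 2 \<le> N" and g: "\<And>t. \<bar>g t\<bar> \<le> M"
  shows "\<bar>vp_mean n N g\<bar> \<le> 3 * M"
proof -
  have "\<bar>\<Sum>j<N. vallee_poussin n (real j * (2 * pi / real N)) * g (real j * (2 * pi / real N))\<bar>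
      \<le> (\<Sum>j<N. \<bar>vallee_poussin n (real j * (2 * pi / real N))\<bar> * M)"
    by (rule order_trans[OF sum_abs]) (intro sum_mono, simp add: abs_mult mult_left_mono g)
  also have "\<dots> \<le> 3 * real N * M"
    using sum_abs_vallee_poussin_equidistant[OF N] order_trans[OF abs_ge_zero g]
    by (simp add: sum_distrib_right[symmetric] mult_right_mono)
  finally show ?thesis using N unfolding vp_mean_def by (simp add: field_simps)
qed

lemma vp_mean_le_sum_abs:
  assumes N: "20 * (n + 1) \<le> N"
  shows "vp_mean n N g \<le> (\<Sum>j<N. \<bar>g (real j * (2 * pi / real N))\<bar>) / 4"
proof -
  have "(\<Sum>j<N. vallee_poussin n (real j * (2 * pi / real N)) * g (real j * (2 * pi / real N)))
      \<le> (\<Sum>j<N. real N / 4 * \<bar>g (real j * (2 * pi / real N))\<bar>)"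
  proof (intro sum_mono)
    fix j
    have "real (20 * (n + 1)) \<le> real N" using N by (rule of_nat_mono)
    then have "5 * (real n + 1) \<le> real N / 4" by simp
    then have v_le: "\<bar>vallee_poussin n (real j * (2 * pi / real N))\<bar> \<le> real N / 4"
      using abs_vallee_poussin_le order_trans by blast
    show "vallee_poussin n (real j * (2 * pi / real N)) * g (real j * (2 * pi / real N))
        \<le> real N / 4 * \<bar>g (real j * (2 * pi / real N))\<bar>"
    proof -
      have "vallee_poussin n (real j * (2 * pi / real N)) * g (real j * (2 * pi / real N))
          \<le> \<bar>vallee_poussin n (real j * (2 * pi / real N))\<bar> * \<bar>g (real j * (2 * pi / real N))\<bar>"
        by (simp flip: abs_mult)
      also have "\<dots> \<le> real N / 4 * \<bar>g (real j * (2 * pi / real N))\<bar>"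
        by (rule mult_right_mono[OF v_le abs_ge_zero])
      finally show ?thesis .
    qed
  qed
  also have "\<dots> = real N / 4 * (\<Sum>j<N. \<bar>g (real j * (2 * pi / real N))\<bar>)"
    by (simp add: sum_distrib_left)
  finally show ?thesis using N unfolding vp_mean_def by (simp add: divide_le_eq mult.commute)
qed

section \<open>A functional annihilating cosine polynomials\<close>

definition second_diff :: "real \<Rightarrow> (real \<Rightarrow> real) \<Rightarrow> real \<Rightarrow> real" where
  "second_diff h f t = f (t + h) + f (t - h) - 2 * f t"

lemma second_diff_add: "second_diff h (\<lambda>t. f t + g t) = (\<lambda>t. second_diff h f t + second_diff h g t)"
  unfolding second_diff_def by (simp add: fun_eq_iff)

lemma second_diff_cmult: "second_diff h (\<lambda>t. c * f t) = (\<lambda>t. c * second_diff h f t)"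
  unfolding second_diff_def by (simp add: fun_eq_iff algebra_simps)

lemma second_diff_cos:
  "second_diff h (\<lambda>t. cos (p * t)) = (\<lambda>t. (2 * cos (p * h) - 2) * cos (p * t))"
  unfolding second_diff_def by (simp add: fun_eq_iff distrib_left cos_add cos_diff algebra_simps)

lemma sum_second_diff_telescope:
  fixes f :: "nat \<Rightarrow> 'a :: comm_ring_1"
  shows "(\<Sum>j\<in>{1..<Suc m}. f (Suc j) + f (j - 1) - 2 * f j) = f (Suc m) - f m - f 1 + f 0"
proof (induction m)
  case (Suc m)
  have "{1..<Suc (Suc m)} = insert (Suc m) {1..<Suc m}" by auto
  then show ?case using Suc by (simp add: algebra_simps)
qed simp

lemma sum_abs_second_diff_concave:
  assumes f: "concave_on {0..real N * h} f" and h: "0 \<le> h" and N: "1 \<le> N"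
  shows "(\<Sum>j\<in>{1..<N}. \<bar>second_diff h f (real j * h)\<bar>)
           = f h - f 0 + f (real (N - 1) * h) - f (real N * h)"
proof -
  define g where "g j = f (real j * h)" for j
  have node_in: "real j * h \<in> {0..real N * h}" if "j \<le> N" for j
    using that h by (auto intro: mult_right_mono)
  have second_diff_eq: "second_diff h f (real j * h) = g (Suc j) + g (j - 1) - 2 * g j" if "1 \<le> j" for j
    unfolding second_diff_def g_def using that by (simp add: algebra_simps of_nat_diff)
  have nonpos: "second_diff h f (real j * h) \<le> 0" if "1 \<le> j" "j < N" for j
  proof -
    have mid: "(1 - 1 / 2) *\<^sub>R (real (j - 1) * h) + (1 / 2) *\<^sub>R (real (Suc j) * h) = real j * h"
      using that by (simp add: of_nat_diff algebra_simps)
    have "(1 - 1 / 2) * g (j - 1) + 1 / 2 * g (Suc j)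
        \<le> f ((1 - 1 / 2) *\<^sub>R (real (j - 1) * h) + (1 / 2) *\<^sub>R (real (Suc j) * h))"
      unfolding g_def by (rule concave_onD[OF f _ _ node_in node_in]) (use that in auto)
    then have "(1 - 1 / 2) * g (j - 1) + 1 / 2 * g (Suc j) \<le> g j"
      unfolding mid g_def .
    then show ?thesis unfolding second_diff_eq[OF that(1)] by simp
  qed
  have "(\<Sum>j\<in>{1..<N}. \<bar>second_diff h f (real j * h)\<bar>)
      = (\<Sum>j\<in>{1..<N}. - (g (Suc j) + g (j - 1) - 2 * g j))"
  proof (intro sum.cong refl)
    fix j
    assume "j \<in> {1..<N}"
    then show "\<bar>second_diff h f (real j * h)\<bar> = - (g (Suc j) + g (j - 1) - 2 * g j)"
      using nonpos[of j] second_diff_eq[of j] by simp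
  qed
  also have "\<dots> = - (\<Sum>j\<in>{1..<N}. g (Suc j) + g (j - 1) - 2 * g j)"
    by (rule sum_negf)
  also obtain m where m: "N = Suc m" using N by (cases N) auto
  then have "- (\<Sum>j\<in>{1..<N}. g (Suc j) + g (j - 1) - 2 * g j) = g 1 - g 0 + g (N - 1) - g N"
    unfolding m sum_second_diff_telescope by simp
  finally show ?thesis unfolding g_def by simp
qed

text \<open>\<open>vp_defect\<close> vanishes on cosine polynomials of degree at most \<open>n\<close>, since
  \<open>vp_mean\<close> reproduces their value at \<open>0\<close>, but not on \<open>\<bar>x\<bar>\<close>-like functions, whose
  second differences concentrate at \<open>0\<close>.\<close>
definition vp_defect :: "nat \<Rightarrow> nat \<Rightarrow> (real \<Rightarrow> real) \<Rightarrow> real" where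
  "vp_defect n N f = second_diff (2 * pi / real N) f 0 - vp_mean n N (second_diff (2 * pi / real N) f)"

lemma vp_defect_add: "vp_defect n N (\<lambda>t. f t + g t) = vp_defect n N f + vp_defect n N g"
  unfolding vp_defect_def second_diff_add vp_mean_add by simp

lemma vp_defect_cmult: "vp_defect n N (\<lambda>t. c * f t) = c * vp_defect n N f"
  unfolding vp_defect_def second_diff_cmult vp_mean_cmult by (simp add: right_diff_distrib)

lemma vp_defect_const: "vp_defect n N (\<lambda>t. c) = 0"
  unfolding vp_defect_def vp_mean_def second_diff_def by simp

lemma vp_defect_diff: "vp_defect n N (\<lambda>t. f t - g t) = vp_defect n N f - vp_defect n N g"
  using vp_defect_add[of n N f "\<lambda>t. - 1 * g t"] vp_defect_cmult[of n N "- 1" g] by simp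

lemma vp_defect_sum:
  "finite I \<Longrightarrow> vp_defect n N (\<lambda>t. \<Sum>i\<in>I. f i t) = (\<Sum>i\<in>I. vp_defect n N (f i))"
  by (induction I rule: finite_induct) (simp_all add: vp_defect_const vp_defect_add)

lemma vp_defect_cos:
  assumes "3 * n + 2 \<le> N" "p \<le> n"
  shows "vp_defect n N (\<lambda>t. cos (real p * t)) = 0"
  unfolding vp_defect_def second_diff_cos vp_mean_cmult vp_mean_cos[OF assms] by simp

lemma abs_vp_defect_le:
  assumes N: "3 * n + 2 \<le> N" and f: "\<And>t. \<bar>f t\<bar> \<le> M"
  shows "\<bar>vp_defect n N f\<bar> \<le> 16 * M"
proof -
  have second_diff_le: "\<bar>second_diff h f t\<bar> \<le> 4 * M" for h t
    unfolding second_diff_def using f[of "t + h"] f[of "t - h"] f[of t] by linarith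
  have "\<bar>vp_mean n N (second_diff (2 * pi / real N) f)\<bar> \<le> 3 * (4 * M)"
    by (rule abs_vp_mean_le[OF N second_diff_le])
  then show ?thesis
    using second_diff_le[of "2 * pi / real N" 0] unfolding vp_defect_def by linarith
qed

lemma cos_power_eq_sum:
  "cos t ^ i = (\<Sum>l\<le>i. real (i choose l) * cos ((real l - real (i - l)) * t)) / 2 ^ i"
proof -
  have cos_eq: "complex_of_real (cos t) = (cis t + cis (- t)) / 2"
    by (simp add: complex_eq_iff)
  have "complex_of_real (cos t ^ i) = (cis t + cis (- t)) ^ i / 2 ^ i"
    unfolding of_real_power cos_eq by (rule power_divide)
  also have "(cis t + cis (- t)) ^ i = (\<Sum>l\<le>i. of_nat (i choose l) * cis t ^ l * cis (- t) ^ (i - l))"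
    by (rule binomial_ring)
  also have "\<dots> = (\<Sum>l\<le>i. of_nat (i choose l) * cis ((real l - real (i - l)) * t))"
    by (intro sum.cong refl) (simp add: Complex.DeMoivre cis_mult algebra_simps)
  finally have "Re (complex_of_real (cos t ^ i))
      = Re ((\<Sum>l\<le>i. of_nat (i choose l) * cis ((real l - real (i - l)) * t)) / 2 ^ i)"
    by simp
  then show ?thesis by (simp add: Re_divide_numeral)
qed

lemma vp_defect_cos_int:
  assumes N: "3 * n + 2 \<le> N" and q: "\<bar>q\<bar> \<le> int n"
  shows "vp_defect n N (\<lambda>t. cos (of_int q * t)) = 0"
proof -
  have "cos (of_int q * t) = cos (real (nat \<bar>q\<bar>) * t)" for t
  proof (cases "q \<ge> 0")
    case False
    then have "real (nat \<bar>q\<bar>) * t = - (of_int q * t)" by simp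
    then show ?thesis by simp
  qed simp
  then show ?thesis using vp_defect_cos[OF N, of "nat \<bar>q\<bar>"] q by simp
qed

lemma vp_defect_cos_power:
  assumes N: "3 * n + 2 \<le> N" and i: "i \<le> n"
  shows "vp_defect n N (\<lambda>t. cos t ^ i) = 0"
proof -
  have expand: "(\<lambda>t. cos t ^ i)
      = (\<lambda>t. (1 / 2 ^ i) * (\<Sum>l\<le>i. real (i choose l) * cos (of_int (int l - int (i - l)) * t)))"
    by (simp add: fun_eq_iff cos_power_eq_sum)
  have "vp_defect n N (\<lambda>t. real (i choose l) * cos (of_int (int l - int (i - l)) * t)) = 0"
    if "l \<le> i" for l
    unfolding vp_defect_cmult using vp_defect_cos_int[OF N, of "int l - int (i - l)"] that i by simp
  then show ?thesis
    unfolding expand vp_defect_cmult vp_defect_sum[OF finite_atMost] by (simp add: sum.neutral)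
qed

lemma vp_defect_poly_cos:
  assumes N: "3 * n + 2 \<le> N" and Q: "degree Q \<le> n"
  shows "vp_defect n N (\<lambda>t. poly Q (cos t)) = 0"
proof -
  have expand: "(\<lambda>t. poly Q (cos t)) = (\<lambda>t. \<Sum>i\<le>degree Q. coeff Q i * cos t ^ i)"
    by (simp add: fun_eq_iff poly_altdef)
  show ?thesis
    using vp_defect_cos_power[OF N] Q
    unfolding expand vp_defect_sum[OF finite_atMost] vp_defect_cmult by (simp add: sum.neutral)
qed

section \<open>Even parts of trigonometric polynomials\<close>

fun chebyshev :: "nat \<Rightarrow> real poly" where
  "chebyshev 0 = 1"
| "chebyshev (Suc 0) = [:0, 1:]"
| "chebyshev (Suc (Suc n)) = [:0, 2:] * chebyshev (Suc n) - chebyshev n"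

lemma poly_chebyshev_cos: "poly (chebyshev n) (cos x) = cos (real n * x)"
proof (induction n rule: chebyshev.induct)
  case (3 n)
  have "cos ((real n + 1) * x + x) + cos ((real n + 1) * x - x) = 2 * cos ((real n + 1) * x) * cos x"
    by (simp add: cos_add cos_diff)
  moreover have "(real n + 1) * x + x = real (Suc (Suc n)) * x" "(real n + 1) * x - x = real n * x"
    by (simp_all add: algebra_simps)
  ultimately show ?case using 3 by (simp add: algebra_simps)
qed auto

lemma degree_chebyshev_le: "degree (chebyshev n) \<le> n"
proof (induction n rule: chebyshev.induct)
  case (3 n)
  have "degree ([:0, 2:] * chebyshev (Suc n)) \<le> Suc (Suc n)"
    using degree_mult_le[of "[:0, 2:]" "chebyshev (Suc n)"] 3(1) by simp
  then show ?case using 3(2) by (simp add: degree_diff_le)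
qed auto

lemma trig_poly_even_part_eq_poly_cos:
  assumes "T \<in> trig_poly n"
  obtains P where "degree P \<le> n" "\<And>x. (T x + T (- x)) / 2 = poly P (cos x)"
proof -
  from assms obtain a b :: "nat \<Rightarrow> real" where
    T: "\<And>x. T x = a 0 + (\<Sum>k=1..n. a k * cos (real k * x) + b k * sin (real k * x))"
    unfolding trig_poly_def by blast
  define P where "P = [:a 0:] + (\<Sum>k=1..n. smult (a k) (chebyshev k))"
  have "degree P \<le> n"
    unfolding P_def
    by (intro degree_add_le degree_sum_le)
       (auto intro: order_trans[OF degree_smult_le] order_trans[OF degree_chebyshev_le])
  moreover have "(T x + T (- x)) / 2 = poly P (cos x)" for x
  proof -
    have "T x + T (- x) = 2 * a 0 + (\<Sum>k=1..n. 2 * (a k * cos (real k * x)))"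
      unfolding T by (simp add: sum.distrib[symmetric])
    then show ?thesis
      unfolding P_def by (simp add: poly_sum poly_chebyshev_cos sum_distrib_left[symmetric])
  qed
  ultimately show ?thesis using that by blast
qed

lemma continuous_on_trig_poly:
  assumes "T \<in> trig_poly n"
  shows "continuous_on S T"
proof -
  from assms obtain a b :: "nat \<Rightarrow> real" where
    "T = (\<lambda>x. a 0 + (\<Sum>k=1..n. a k * cos (real k * x) + b k * sin (real k * x)))"
    unfolding trig_poly_def by blast
  then show ?thesis by (auto intro!: continuous_intros)
qed

section \<open>The scaled chord angle\<close>

lemma sin_ge_two_div_pi_mult:
  assumes "0 \<le> x" "x \<le> pi / 2"
  shows "2 / pi * x \<le> sin x"
proof -
  have "concave_on {0..pi / 2} sin"
    by (rule f''_le0_imp_concave[where f' = cos and f'' = "\<lambda>x. - sin x"])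
       (auto intro!: derivative_eq_intros sin_ge_zero)
  from concave_onD[OF this, of "2 / pi * x" 0 "pi / 2"] assms
  show ?thesis by (simp add: field_simps)
qed

lemma mono_div_sqrt_add_square:
  assumes "a > 0"
  shows "mono (\<lambda>x. x / sqrt (a + (s * x)\<^sup>2))"
proof -
  have nonneg: "c / sqrt (a + (s * c)\<^sup>2) \<le> d / sqrt (a + (s * d)\<^sup>2)" if "0 \<le> c" "c \<le> d" for c d
  proof -
    have "c\<^sup>2 * (a + (s * d)\<^sup>2) \<le> d\<^sup>2 * (a + (s * c)\<^sup>2)"
      using that assms power_mono[OF that(2) that(1)] by (simp add: algebra_simps power_mult_distrib)
    then have "c\<^sup>2 / (a + (s * c)\<^sup>2) \<le> d\<^sup>2 / (a + (s * d)\<^sup>2)"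
      using assms by (simp add: divide_le_eq le_divide_eq add_pos_nonneg mult.commute)
    then have "sqrt (c\<^sup>2 / (a + (s * c)\<^sup>2)) \<le> sqrt (d\<^sup>2 / (a + (s * d)\<^sup>2))"
      by (rule real_sqrt_le_mono)
    then show ?thesis
      using that by (simp add: real_sqrt_divide)
  qed
  show ?thesis
  proof (rule monoI)
    fix c d :: real
    assume "c \<le> d"
    consider "0 \<le> c" | "d \<le> 0" | "c < 0" "0 < d" by linarith
    then show "c / sqrt (a + (s * c)\<^sup>2) \<le> d / sqrt (a + (s * d)\<^sup>2)"
    proof cases
      case 1
      then show ?thesis using nonneg \<open>c \<le> d\<close> by blast
    next
      case 2
      then show ?thesis using nonneg[of "- d" "- c"] \<open>c \<le> d\<close> by simp
    next
      case 3
      then have "c / sqrt (a + (s * c)\<^sup>2) \<le> 0" "0 \<le> d / sqrt (a + (s * d)\<^sup>2)"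
        using assms by (auto intro!: divide_nonpos_nonneg divide_nonneg_nonneg add_nonneg_nonneg)
      then show ?thesis by linarith
    qed
  qed
qed

text \<open>A chord of the unit circle subtending the angle \<open>t\<close> has length \<open>2 sin (t / 2)\<close>, so
  this is the angle subtended by that chord scaled by \<open>s\<close>.\<close>
definition scaled_chord_angle :: "real \<Rightarrow> real \<Rightarrow> real" where
  "scaled_chord_angle s t = 2 * arcsin (s * sin (t / 2))"

lemma abs_mult_sin_le:
  fixes s x :: real
  shows "\<bar>s * sin x\<bar> \<le> \<bar>s\<bar>"
  using mult_left_mono[OF abs_sin_le_one[of x], of "\<bar>s\<bar>"] by (simp add: abs_mult)

lemma cos_scaled_chord_angle:
  assumes "\<bar>s\<bar> \<le> 1"
  shows "cos (scaled_chord_angle s t) = 1 - s\<^sup>2 + s\<^sup>2 * cos t"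
proof -
  have "\<bar>s * sin (t / 2)\<bar> \<le> 1" using abs_mult_sin_le[of s "t / 2"] assms by linarith
  then have "cos (scaled_chord_angle s t) = 1 - s\<^sup>2 * (2 * (sin (t / 2))\<^sup>2)"
    unfolding scaled_chord_angle_def cos_double_sin by (simp add: power_mult_distrib)
  also have "2 * (sin (t / 2))\<^sup>2 = 1 - cos t"
    using cos_double_sin[of "t / 2"] by simp
  finally show ?thesis by (simp add: algebra_simps)
qed

lemma scaled_chord_angle_minus:
  assumes "\<bar>s\<bar> \<le> 1"
  shows "scaled_chord_angle s (- t) = - scaled_chord_angle s t"
  using abs_mult_sin_le[of s "t / 2"] assms arcsin_minus[of "s * sin (t / 2)"]
  unfolding scaled_chord_angle_def by simp

lemma abs_scaled_chord_angle_le: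
  assumes "0 \<le> b" "b \<le> pi"
  shows "\<bar>scaled_chord_angle (sin (b / 2)) t\<bar> \<le> b"
proof -
  define s where "s = sin (b / 2)"
  have s: "0 \<le> s" "s \<le> 1" unfolding s_def using assms by (auto intro: sin_ge_zero)
  have "\<bar>s * sin (t / 2)\<bar> \<le> s" using abs_mult_sin_le[of s] s by simp
  then have "arcsin (- s) \<le> arcsin (s * sin (t / 2))" "arcsin (s * sin (t / 2)) \<le> arcsin s"
    using s by (simp_all add: arcsin_le_mono)
  moreover have "arcsin s = b / 2" unfolding s_def using assms by (intro arcsin_sin) auto
  ultimately show ?thesis using s arcsin_minus[of s] unfolding scaled_chord_angle_def s_def[symmetric] by simp
qed

lemma scaled_chord_angle_nonneg:
  assumes "0 \<le> s" "s \<le> 1" "0 \<le> t" "t \<le> 2 * pi"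
  shows "0 \<le> scaled_chord_angle s t"
proof -
  have "0 \<le> s * sin (t / 2)" using assms by (simp add: sin_ge_zero)
  moreover have "s * sin (t / 2) \<le> 1" using abs_mult_sin_le[of s "t / 2"] assms by simp
  ultimately show ?thesis unfolding scaled_chord_angle_def by (simp add: arcsin_nonneg)
qed

lemma scaled_chord_angle_ge:
  assumes s: "0 \<le> s" "s \<le> 1" and t: "0 \<le> t" "t \<le> pi"
  shows "2 * s * t / pi \<le> scaled_chord_angle s t"
proof -
  have "2 / pi * (t / 2) \<le> sin (t / 2)" using t by (intro sin_ge_two_div_pi_mult) auto
  then have "s * t / pi \<le> s * sin (t / 2)" using s mult_left_mono by fastforce
  also have "s * sin (t / 2) \<le> arcsin (s * sin (t / 2))"
  proof -
    have "0 \<le> s * sin (t / 2)" using s t by (simp add: sin_ge_zero)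
    moreover have "s * sin (t / 2) \<le> 1" using abs_mult_sin_le[of s "t / 2"] s by simp
    ultimately show ?thesis using sin_x_le_x[OF arcsin_nonneg] by simp
  qed
  finally show ?thesis unfolding scaled_chord_angle_def by simp
qed

lemma has_real_derivative_scaled_chord_angle:
  assumes "\<bar>s\<bar> < 1"
  shows "(scaled_chord_angle s has_real_derivative s * cos (t / 2) / sqrt (1 - (s * sin (t / 2))\<^sup>2)) (at t)"
proof -
  have "\<bar>s * sin (t / 2)\<bar> < 1" using abs_mult_sin_le[of s "t / 2"] assms by simp
  moreover have "((\<lambda>x. s * sin (x / 2)) has_real_derivative s * (cos (t / 2) / 2)) (at t)"
    by (auto intro!: derivative_eq_intros)
  ultimately have "((\<lambda>x. arcsin (s * sin (x / 2))) has_real_derivative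
      inverse (sqrt (1 - (s * sin (t / 2))\<^sup>2)) * (s * (cos (t / 2) / 2))) (at t)"
    by (intro DERIV_chain2[OF DERIV_arcsin]) auto
  then have "((\<lambda>x. 2 * arcsin (s * sin (x / 2))) has_real_derivative
      2 * (inverse (sqrt (1 - (s * sin (t / 2))\<^sup>2)) * (s * (cos (t / 2) / 2)))) (at t)"
    by (rule DERIV_cmult)
  moreover have "scaled_chord_angle s = (\<lambda>x. 2 * arcsin (s * sin (x / 2)))"
    by (simp add: fun_eq_iff scaled_chord_angle_def)
  ultimately show ?thesis by (simp add: field_simps)
qed

lemma concave_on_scaled_chord_angle:
  assumes s: "0 \<le> s" "s < 1"
  shows "concave_on {0..2 * pi} (scaled_chord_angle s)"
  unfolding concave_on_def
proof (rule convex_on_realI)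
  show "connected {0..2 * pi}" by simp
  show "((\<lambda>t. - scaled_chord_angle s t) has_real_derivative
      - (s * cos (t / 2) / sqrt (1 - (s * sin (t / 2))\<^sup>2))) (at t)" for t
    using s by (intro DERIV_minus has_real_derivative_scaled_chord_angle) simp
  fix u v
  assume uv: "u \<in> {0..2 * pi}" "v \<in> {0..2 * pi}" "u \<le> v"
  have denom: "1 - (s * sin (x / 2))\<^sup>2 = (1 - s\<^sup>2) + (s * cos (x / 2))\<^sup>2" for x
    by (simp add: power_mult_distrib sin_squared_eq algebra_simps)
  have "1 - s\<^sup>2 > 0" using s by (simp add: power_less_one_iff)
  moreover have "cos (v / 2) \<le> cos (u / 2)" using uv by (intro cos_monotone_0_pi_le) auto
  ultimately have "cos (v / 2) / sqrt ((1 - s\<^sup>2) + (s * cos (v / 2))\<^sup>2)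
      \<le> cos (u / 2) / sqrt ((1 - s\<^sup>2) + (s * cos (u / 2))\<^sup>2)"
    using mono_div_sqrt_add_square monoD by blast
  then have "s * (cos (v / 2) / sqrt ((1 - s\<^sup>2) + (s * cos (v / 2))\<^sup>2))
      \<le> s * (cos (u / 2) / sqrt ((1 - s\<^sup>2) + (s * cos (u / 2))\<^sup>2))"
    using s(1) by (rule mult_left_mono)
  then show "- (s * cos (u / 2) / sqrt (1 - (s * sin (u / 2))\<^sup>2))
      \<le> - (s * cos (v / 2) / sqrt (1 - (s * sin (v / 2))\<^sup>2))"
    unfolding denom by simp
qed

lemma second_diff_abs_scaled_chord_angle_0:
  assumes s: "0 \<le> s" "s \<le> 1" and h: "0 \<le> h" "h \<le> 2 * pi"
  shows "second_diff h (\<lambda>t. \<bar>scaled_chord_angle s t\<bar>) 0 = 2 * scaled_chord_angle s h"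
  using scaled_chord_angle_nonneg[OF s h] scaled_chord_angle_minus[of s h] s
  unfolding second_diff_def by (simp add: scaled_chord_angle_def)

lemma sum_abs_second_diff_abs_scaled_chord_angle:
  assumes s: "0 \<le> s" "s < 1" and N: "0 < N"
  defines "h \<equiv> 2 * pi / real N"
  shows "(\<Sum>j<N. \<bar>second_diff h (\<lambda>t. \<bar>scaled_chord_angle s t\<bar>) (real j * h)\<bar>) = 4 * scaled_chord_angle s h"
proof -
  define \<phi> where "\<phi> = scaled_chord_angle s"
  have Nh: "real N * h = 2 * pi" unfolding h_def using N by simp
  have h: "0 \<le> h" "h \<le> 2 * pi" using N unfolding h_def by (auto simp: field_simps)
  have abs_\<phi>: "\<bar>\<phi> t\<bar> = \<phi> t" if "t \<in> {0..2 * pi}" for t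
    using scaled_chord_angle_nonneg[of s t] s that unfolding \<phi>_def by simp
  have "\<phi> 0 = 0" "\<phi> (2 * pi) = 0" unfolding \<phi>_def scaled_chord_angle_def by simp_all
  moreover have "\<phi> (real (N - 1) * h) = \<phi> h"
  proof -
    have "real (N - 1) * h / 2 = pi - h / 2" using Nh N by (simp add: of_nat_diff field_simps)
    then show ?thesis by (simp only: \<phi>_def scaled_chord_angle_def sin_pi_minus)
  qed
  moreover have "second_diff h \<phi> (real j * h) = second_diff h (\<lambda>t. \<bar>\<phi> t\<bar>) (real j * h)"
    if "1 \<le> j" "j < N" for j
  proof -
    have "real (Suc j) * h \<le> real N * h" "1 * h \<le> real j * h"
      using that h(1) by (intro mult_right_mono; simp)+
    then have "real j * h + h \<in> {0..2 * pi}" "real j * h - h \<in> {0..2 * pi}" "real j * h \<in> {0..2 * pi}"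
      using Nh h by (auto simp: algebra_simps)
    then show ?thesis unfolding second_diff_def using abs_\<phi> by simp
  qed
  ultimately have "(\<Sum>j\<in>{1..<N}. \<bar>second_diff h (\<lambda>t. \<bar>\<phi> t\<bar>) (real j * h)\<bar>) = 2 * \<phi> h"
    using sum_abs_second_diff_concave[of N h \<phi>] concave_on_scaled_chord_angle[OF s] abs_\<phi> h N Nh
    unfolding \<phi>_def by simp
  moreover have "\<bar>second_diff h (\<lambda>t. \<bar>\<phi> t\<bar>) 0\<bar> = 2 * \<phi> h"
    using second_diff_abs_scaled_chord_angle_0[of s h] scaled_chord_angle_nonneg[of s h] s h
    unfolding \<phi>_def by simp
  ultimately show ?thesis
    using N unfolding \<phi>_def by (simp add: lessThan_atLeast0 sum.atLeast_Suc_lessThan)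
qed

lemma vp_defect_abs_scaled_chord_angle_ge:
  assumes s: "0 \<le> s" "s < 1" and N: "20 * (n + 1) \<le> N"
  shows "scaled_chord_angle s (2 * pi / real N) \<le> vp_defect n N (\<lambda>t. \<bar>scaled_chord_angle s t\<bar>)"
proof -
  have h: "0 \<le> 2 * pi / real N" "2 * pi / real N \<le> 2 * pi"
    using N by (auto simp: field_simps)
  have "vp_mean n N (second_diff (2 * pi / real N) (\<lambda>t. \<bar>scaled_chord_angle s t\<bar>))
      \<le> scaled_chord_angle s (2 * pi / real N)"
    using vp_mean_le_sum_abs[OF N, of "second_diff (2 * pi / real N) (\<lambda>t. \<bar>scaled_chord_angle s t\<bar>)"]
      sum_abs_second_diff_abs_scaled_chord_angle[OF s, of N] N
    by simp
  then show ?thesis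
    using second_diff_abs_scaled_chord_angle_0[of s, OF _ _ h] s unfolding vp_defect_def by simp
qed

section \<open>The lower bound\<close>

lemma abs_le_sup_norm_on:
  assumes "continuous_on {lo..hi} g" "x \<in> {lo..hi}"
  shows "\<bar>g x\<bar> \<le> sup_norm_on lo hi g"
proof -
  have "bdd_above ((\<lambda>x. \<bar>g x\<bar>) ` {lo..hi})"
    using assms(1) by (intro bounded_imp_bdd_above compact_imp_bounded compact_continuous_image continuous_intros) auto
  then show ?thesis unfolding sup_norm_on_def using assms(2) by (rule cSUP_upper2) simp
qed

lemma scaled_chord_angle_approx_of_deviation:
  assumes T: "T \<in> trig_poly n" and b: "0 \<le> b" "b \<le> pi"
    and dev: "\<And>x. x \<in> {-b..b} \<Longrightarrow> \<bar>\<bar>x\<bar> + (a * x + k) - T x\<bar> \<le> \<epsilon>"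
  obtains Q where "degree Q \<le> n"
    "\<And>t. \<bar>\<bar>scaled_chord_angle (sin (b / 2)) t\<bar> + k - poly Q (cos t)\<bar> \<le> \<epsilon>"
proof -
  define s where "s = sin (b / 2)"
  have s: "\<bar>s\<bar> \<le> 1" unfolding s_def by simp
  obtain P where P: "degree P \<le> n" "\<And>x. (T x + T (- x)) / 2 = poly P (cos x)"
    using trig_poly_even_part_eq_poly_cos[OF T] by blast
  define Q where "Q = pcompose P [:1 - s\<^sup>2, s\<^sup>2:]"
  have "degree Q \<le> degree P * degree [:1 - s\<^sup>2, s\<^sup>2:]"
    unfolding Q_def by (rule degree_pcompose_le)
  also have "\<dots> \<le> n" using P(1) by (simp add: mult_le_one order_trans[OF mult_le_mono1])
  finally have "degree Q \<le> n" .
  moreover have "\<bar>\<bar>scaled_chord_angle s t\<bar> + k - poly Q (cos t)\<bar> \<le> \<epsilon>" for t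
  proof -
    define x where "x = scaled_chord_angle s t"
    have x: "x \<in> {-b..b}" "- x \<in> {-b..b}"
      using abs_scaled_chord_angle_le[OF b, of t] unfolding x_def s_def by auto
    have "poly Q (cos t) = poly P (cos x)"
      unfolding Q_def x_def poly_pcompose cos_scaled_chord_angle[OF s] by (simp add: algebra_simps)
    then have "\<bar>x\<bar> + k - poly Q (cos t)
        = ((\<bar>x\<bar> + (a * x + k) - T x) + (\<bar>- x\<bar> + (a * (- x) + k) - T (- x))) / 2"
      using P(2)[of x] by (simp add: field_simps)
    then show ?thesis using dev[OF x(1)] dev[OF x(2)] unfolding x_def by simp
  qed
  ultimately show ?thesis using that unfolding s_def by blast
qed

lemma scaled_chord_angle_approx_ge:
  assumes s: "0 \<le> s" "s < 1" and n: "1 \<le> n" and Q: "degree Q \<le> n"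
    and approx: "\<And>t. \<bar>\<bar>scaled_chord_angle s t\<bar> + k - poly Q (cos t)\<bar> \<le> \<epsilon>"
  shows "s / (160 * real n) \<le> \<epsilon>"
proof -
  define N where "N = 40 * n"
  have N: "20 * (n + 1) \<le> N" "3 * n + 2 \<le> N" unfolding N_def using n by auto
  have h: "0 \<le> 2 * pi / real N" "2 * pi / real N \<le> pi"
    using N by (auto simp: field_simps)
  have "4 * s / real N = 2 * s * (2 * pi / real N) / pi" by simp
  also have "\<dots> \<le> scaled_chord_angle s (2 * pi / real N)"
    using s h by (intro scaled_chord_angle_ge) auto
  also have "\<dots> \<le> vp_defect n N (\<lambda>t. \<bar>scaled_chord_angle s t\<bar>)"
    using s N by (intro vp_defect_abs_scaled_chord_angle_ge) auto
  also have "\<dots> = vp_defect n N (\<lambda>t. \<bar>scaled_chord_angle s t\<bar> + k - poly Q (cos t))"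
    unfolding vp_defect_diff vp_defect_add vp_defect_const vp_defect_poly_cos[OF N(2) Q] by simp
  also have "\<dots> \<le> \<bar>vp_defect n N (\<lambda>t. \<bar>scaled_chord_angle s t\<bar> + k - poly Q (cos t))\<bar>"
    by (rule abs_ge_self)
  also have "\<dots> \<le> 16 * \<epsilon>"
    by (intro abs_vp_defect_le[OF N(2)] approx)
  finally show ?thesis using n unfolding N_def by (simp add: field_simps)
qed

lemma abs_approx_trig_poly_ge:
  assumes b: "0 < b" "b \<le> pi" and n: "1 \<le> n" and T: "T \<in> trig_poly n"
    and dev: "\<And>x. x \<in> {-b..b} \<Longrightarrow> \<bar>\<bar>x\<bar> + (a * x + k) - T x\<bar> \<le> \<epsilon>"
  shows "b / (1280 * real n) \<le> \<epsilon>"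
proof -
  have "\<bar>\<bar>x\<bar> + (a * x + k) - T x\<bar> \<le> \<epsilon>" if "x \<in> {-(b / 2)..b / 2}" for x
    using that b by (intro dev) auto
  moreover have "0 \<le> b / 2" "b / 2 \<le> pi" using b by auto
  ultimately obtain Q where Q: "degree Q \<le> n"
    "\<And>t. \<bar>\<bar>scaled_chord_angle (sin (b / 2 / 2)) t\<bar> + k - poly Q (cos t)\<bar> \<le> \<epsilon>"
    using scaled_chord_angle_approx_of_deviation[OF T] by metis
  have s: "b / (2 * pi) \<le> sin (b / 2 / 2)" "sin (b / 2 / 2) < 1"
    using sin_ge_two_div_pi_mult[of "b / 4"] sin_monotone_2pi[of "b / 4" "pi / 2"] b by auto
  have "b / (1280 * real n) \<le> b / (2 * pi) / (160 * real n)"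
    using b n pi_less_4 by (simp add: divide_left_mono mult_mono)
  also have "\<dots> \<le> sin (b / 2 / 2) / (160 * real n)"
    using s(1) by (rule divide_right_mono) simp
  also have "\<dots> \<le> \<epsilon>"
    using s b by (intro scaled_chord_angle_approx_ge[OF _ _ n Q]) (auto intro: sin_ge_zero)
  finally show ?thesis .
qed

theorem corollary3p5:
  shows "\<exists>c1 > (0::real). \<forall>b n a k T.
     0 < b \<and> b \<le> pi \<and> n \<ge> 1 \<and> T \<in> trig_poly n \<longrightarrow>
     sup_norm_on (-b) b (\<lambda>x. \<bar>x\<bar> + (a * x + k) - T x) \<ge> c1 * b / real n"
proof (intro exI[of _ "1 / 1280"] conjI allI impI)
  fix b a k :: real and n T
  assume "0 < b \<and> b \<le> pi \<and> n \<ge> 1 \<and> T \<in> trig_poly n"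
  then have b: "0 < b" "b \<le> pi" and n: "1 \<le> n" and T: "T \<in> trig_poly n" by auto
  have "continuous_on {-b..b} (\<lambda>x. \<bar>x\<bar> + (a * x + k) - T x)"
    using continuous_on_trig_poly[OF T] by (intro continuous_intros)
  then have "b / (1280 * real n) \<le> sup_norm_on (-b) b (\<lambda>x. \<bar>x\<bar> + (a * x + k) - T x)"
    by (intro abs_approx_trig_poly_ge[OF b n T, of a k] abs_le_sup_norm_on)
  then show "1 / 1280 * b / real n \<le> sup_norm_on (-b) b (\<lambda>x. \<bar>x\<bar> + (a * x + k) - T x)"
    by simp
qed simp

end
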